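(* Let $d\ge 2$, $D=\{1,\dots,d\}$, and let $\xi=(\xi_1,\dots,\xi_d)$ be a random vector with centered coordinates. Let $\phi\in\Phi$ be a Young–Orlicz function such that $\beta_i:=\|\xi_i\|_{B(\phi)}\in(0,\infty)$ for every $i\in D$. Suppose moreover that for every $i\in D$ there exists $\delta_i\in(0,\beta_i]$ with $$\mathbf P(\xi_i>u)\ge\exp\big(-\nu[\phi](u/\delta_i)\big)\quad\text{for all }u\ge 1.$$ Then for all $u\ge1$, $$\mathbf P\Big(\max_{i\in D}\xi_i>u\Big)\ \ge\ \sum_{i\in D}\exp\big(-\nu[\phi](u/\delta_i)\big)\ -\sum_{\substack{i,j\in D\\ i\neq j}}\exp\Big(-\nu[\phi]\Big(\frac{2u}{\beta_i+\beta_j}\Big)\Big),$$ where the double sum runs over ordered pairs $(i,j)$ with $i\ne j$.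
   Context: A Young–Orlicz function is a function $\phi:(-\lambda_0,\lambda_0)\to[0,\infty)$, for some $\lambda_0\in(0,\infty]$, which is even, strictly convex, twice continuously differentiable, positive for positive arguments, with $\phi(0)=0$, $\phi'(0)=0$, $\phi''(0)\in(0,\infty)$; $\Phi$ denotes the set of all such functions. For a centered random variable $\eta$, its $B(\phi)$-norm is $$\|\eta\|_{B(\phi)}:=\inf\{\tau\ge 0:\ \mathbf E\exp(\pm\lambda\eta)\le\exp(\phi(\lambda\tau))\ \text{for all real }\lambda\text{ with }|\lambda\tau|<\lambda_0\},$$ and $B(\phi)$ is the space of centered random variables with finite such norm. The Young–Fenchel (Legendre) transform of $\phi$ is $\nu[\phi](x):=\sup_{|\lambda|<\lambda_0}(\lambda x-\phi(\lambda))$. *)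

theory Defs
  imports "HOL-Analysis.Analysis" "HOL-Probability.Probability"
begin

definition yo_dom :: "ereal \<Rightarrow> real set" where
  "yo_dom l0 = {x. ereal \<bar>x\<bar> < l0}"

definition strictly_convex_on :: "real set \<Rightarrow> (real \<Rightarrow> real) \<Rightarrow> bool" where
  "strictly_convex_on S f \<longleftrightarrow>
     (\<forall>x\<in>S. \<forall>y\<in>S. x \<noteq> y \<longrightarrow> (\<forall>t::real. 0 < t \<and> t < 1 \<longrightarrow>
        f ((1 - t) * x + t * y) < (1 - t) * f x + t * f y))"

text \<open>The class Phi of Young-Orlicz functions (phi considered only on (-l0,l0)).\<close>
definition young_orlicz :: "(real \<Rightarrow> real) \<Rightarrow> ereal \<Rightarrow> bool" where
  "young_orlicz phi l0 \<longleftrightarrow>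
     0 < l0 \<and>
     (\<forall>x\<in>yo_dom l0. 0 \<le> phi x) \<and>
     (\<forall>x\<in>yo_dom l0. phi (- x) = phi x) \<and>
     strictly_convex_on (yo_dom l0) phi \<and>
     (\<forall>x\<in>yo_dom l0. phi differentiable (at x)) \<and>
     (\<forall>x\<in>yo_dom l0. (deriv phi) differentiable (at x)) \<and>
     continuous_on (yo_dom l0) (deriv (deriv phi)) \<and>
     (\<forall>x\<in>yo_dom l0. 0 < x \<longrightarrow> 0 < phi x) \<and>
     phi 0 = 0 \<and> deriv phi 0 = 0 \<and> 0 < deriv (deriv phi) 0"

text \<open>B(phi)-norm (infimum of the empty set is +infinity).\<close>
definition bphi_norm :: "'a measure \<Rightarrow> (real \<Rightarrow> real) \<Rightarrow> ereal \<Rightarrow> ('a \<Rightarrow> real) \<Rightarrow> ereal" where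
  "bphi_norm M phi l0 \<eta> =
     Inf (ereal ` {\<tau>::real. 0 \<le> \<tau> \<and>
        (\<forall>s::real. ereal \<bar>s * \<tau>\<bar> < l0 \<longrightarrow>
           (\<integral>\<^sup>+ x. ennreal (exp (s * \<eta> x)) \<partial>M) \<le> ennreal (exp (phi (s * \<tau>))) \<and>
           (\<integral>\<^sup>+ x. ennreal (exp (- s * \<eta> x)) \<partial>M) \<le> ennreal (exp (phi (s * \<tau>))))})"

definition young_fenchel :: "(real \<Rightarrow> real) \<Rightarrow> ereal \<Rightarrow> real \<Rightarrow> ereal" where
  "young_fenchel phi l0 x = (SUP s\<in>yo_dom l0. ereal (s * x - phi s))"

definition exp_neg :: "ereal \<Rightarrow> real" where
  "exp_neg v = (if v = \<infinity> then 0 else if v = - \<infinity> then 0 else exp (- real_of_ereal v))"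

end

theory Submission
  imports Defs
begin

text \<open>The event {max_i \<xi> i > u} is the union of the events A i = {\<xi> i > u}, so Bonferroni's
  inequality bounds its probability from below by the sum of P(A i) minus the sum of
  P(A i \<inter> A j) over i \<noteq> j. On A i \<inter> A j we have
  \<xi> i + \<xi> j > 2u, and convexity of exp together with the B(\<phi>)-norm bounds of \<xi> i and \<xi> j gives
  E exp(t (\<xi> i + \<xi> j) / (\<beta> i + \<beta> j)) \<le> exp(\<phi>(t)); Chernoff's bound, optimised over t,
  yields P(A i \<inter> A j) \<le> exp(-\<nu>[\<phi>](2u / (\<beta> i + \<beta> j))).\<close>

lemma young_orlicz_isCont:
  assumes "young_orlicz phi l0" "x \<in> yo_dom l0"
  shows "isCont phi x"
  using assms unfolding young_orlicz_def by (meson differentiable_imp_continuous_within)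

lemma nn_integral_exp_le_bphi_norm:
  assumes yo: "young_orlicz phi l0"
    and norm: "bphi_norm M phi l0 \<eta> = ereal \<beta>"
    and s: "ereal \<bar>s * \<beta>\<bar> < l0"
  shows "(\<integral>\<^sup>+ x. ennreal (exp (s * \<eta> x)) \<partial>M) \<le> ennreal (exp (phi (s * \<beta>)))"
proof -
  define Adm where "Adm = {\<tau>::real. 0 \<le> \<tau> \<and>
        (\<forall>s::real. ereal \<bar>s * \<tau>\<bar> < l0 \<longrightarrow>
           (\<integral>\<^sup>+ x. ennreal (exp (s * \<eta> x)) \<partial>M) \<le> ennreal (exp (phi (s * \<tau>))) \<and>
           (\<integral>\<^sup>+ x. ennreal (exp (- s * \<eta> x)) \<partial>M) \<le> ennreal (exp (phi (s * \<tau>))))}"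
  have Inf_Adm: "Inf (ereal ` Adm) = ereal \<beta>"
    using norm unfolding bphi_norm_def Adm_def by simp
  then have "ereal ` Adm \<noteq> {}" by (auto simp: top_ereal_def)
  then obtain T where T: "\<And>n. T n \<in> ereal ` Adm" and T_lim: "T \<longlonglongrightarrow> ereal \<beta>"
    using Inf_as_limit Inf_Adm by metis
  have "\<exists>\<tau>. \<forall>n. \<tau> n \<in> Adm \<and> T n = ereal (\<tau> n)"
    using T by (intro choice) blast
  then obtain \<tau> where \<tau>_Adm: "\<And>n. \<tau> n \<in> Adm" and "T = (\<lambda>n. ereal (\<tau> n))"
    by auto
  with T_lim have \<tau>_lim: "\<tau> \<longlonglongrightarrow> \<beta>"
    by (simp add: lim_ereal)
  have "(\<lambda>n. ereal \<bar>s * \<tau> n\<bar>) \<longlonglongrightarrow> ereal \<bar>s * \<beta>\<bar>"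
    unfolding lim_ereal by (intro tendsto_intros \<tau>_lim)
  then have in_dom: "\<forall>\<^sub>F n in sequentially. ereal \<bar>s * \<tau> n\<bar> < l0"
    using s by (rule order_tendstoD)
  have "isCont phi (s * \<beta>)"
    using young_orlicz_isCont[OF yo] s by (simp add: yo_dom_def)
  then have "(\<lambda>n. phi (s * \<tau> n)) \<longlonglongrightarrow> phi (s * \<beta>)"
    using isCont_tendsto_compose tendsto_mult_left[OF \<tau>_lim] by blast
  then have "(\<lambda>n. ennreal (exp (phi (s * \<tau> n)))) \<longlonglongrightarrow> ennreal (exp (phi (s * \<beta>)))"
    by (intro tendsto_ennrealI tendsto_intros)
  then show ?thesis
  proof (rule tendsto_lowerbound)
    show "\<forall>\<^sub>F n in sequentially.
        (\<integral>\<^sup>+ x. ennreal (exp (s * \<eta> x)) \<partial>M) \<le> ennreal (exp (phi (s * \<tau> n)))"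
      using in_dom by eventually_elim (use \<tau>_Adm in \<open>auto simp: Adm_def\<close>)
  qed simp
qed

lemma exp_convex_comb_le:
  fixes a b x y :: real
  assumes "0 < a" "0 < b"
  shows "exp ((x + y) / (a + b)) \<le> a / (a + b) * exp (x / a) + b / (a + b) * exp (y / b)"
proof -
  have "1 - b / (a + b) = a / (a + b)"
    using assms by (simp add: field_simps)
  moreover have "a / (a + b) * (x / a) + b / (a + b) * (y / b) = (x + y) / (a + b)"
    using assms by (simp add: add_divide_distrib)
  ultimately show ?thesis
    using convex_onD[OF exp_convex, of "b / (a + b)" "x / a" "y / b"] assms by simp
qed

lemma nn_integral_exp_sum_le:
  assumes yo: "young_orlicz phi l0"
    and X: "X \<in> borel_measurable M" and Y: "Y \<in> borel_measurable M"
    and nX: "bphi_norm M phi l0 X = ereal a" and a: "0 < a"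
    and nY: "bphi_norm M phi l0 Y = ereal b" and b: "0 < b"
    and t: "t \<in> yo_dom l0"
  shows "(\<integral>\<^sup>+ x. ennreal (exp (t * (X x + Y x) / (a + b))) \<partial>M) \<le> ennreal (exp (phi t))"
proof -
  have t_l0: "ereal \<bar>t\<bar> < l0" using t by (simp add: yo_dom_def)
  have convex: "ennreal (exp (t * (X x + Y x) / (a + b)))
      \<le> ennreal (a / (a + b)) * ennreal (exp (t / a * X x)) + ennreal (b / (a + b)) * ennreal (exp (t / b * Y x))"
    for x
  proof -
    have "exp (t * (X x + Y x) / (a + b)) \<le> a / (a + b) * exp (t / a * X x) + b / (a + b) * exp (t / b * Y x)"
      using exp_convex_comb_le[OF a b, of "t * X x" "t * Y x"] by (simp add: distrib_left)
    then have "ennreal (exp (t * (X x + Y x) / (a + b)))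
        \<le> ennreal (a / (a + b) * exp (t / a * X x) + b / (a + b) * exp (t / b * Y x))"
      by (rule ennreal_leI)
    also have "\<dots> = ennreal (a / (a + b)) * ennreal (exp (t / a * X x))
        + ennreal (b / (a + b)) * ennreal (exp (t / b * Y x))"
      using a b by (simp add: ennreal_plus flip: ennreal_mult)
    finally show ?thesis .
  qed
  have "(\<integral>\<^sup>+ x. ennreal (exp (t * (X x + Y x) / (a + b))) \<partial>M)
      \<le> (\<integral>\<^sup>+ x. ennreal (a / (a + b)) * ennreal (exp (t / a * X x))
               + ennreal (b / (a + b)) * ennreal (exp (t / b * Y x)) \<partial>M)"
    using convex by (rule nn_integral_mono)
  also have "\<dots> = ennreal (a / (a + b)) * (\<integral>\<^sup>+ x. ennreal (exp (t / a * X x)) \<partial>M)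
                 + ennreal (b / (a + b)) * (\<integral>\<^sup>+ x. ennreal (exp (t / b * Y x)) \<partial>M)"
    using X Y by (simp add: nn_integral_add nn_integral_cmult)
  also have "\<dots> \<le> ennreal (a / (a + b)) * ennreal (exp (phi t)) + ennreal (b / (a + b)) * ennreal (exp (phi t))"
    using nn_integral_exp_le_bphi_norm[OF yo nX, of "t / a"] nn_integral_exp_le_bphi_norm[OF yo nY, of "t / b"]
      t_l0 a b by (intro add_mono mult_left_mono) auto
  also have "\<dots> = ennreal (exp (phi t))"
    using a b by (simp add: ennreal_mult[symmetric] ennreal_plus[symmetric] add_divide_distrib[symmetric]
        distrib_right[symmetric])
  finally show ?thesis .
qed

lemma measure_both_gt_le:
  assumes "prob_space M" and yo: "young_orlicz phi l0"
    and X: "X \<in> borel_measurable M" and Y: "Y \<in> borel_measurable M"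
    and nX: "bphi_norm M phi l0 X = ereal a" and a: "0 < a"
    and nY: "bphi_norm M phi l0 Y = ereal b" and b: "0 < b"
    and u: "0 \<le> u" and t: "t \<in> yo_dom l0"
  shows "measure M {x\<in>space M. u < X x \<and> u < Y x} \<le> exp (- (t * (2 * u / (a + b)) - phi t))"
proof -
  interpret prob_space M by fact
  define E where "E = {x\<in>space M. u < X x \<and> u < Y x}"
  define c where "c = t * (2 * u / (a + b))"
  show ?thesis
  proof (cases "0 \<le> t")
    case False
    have "c \<le> 0" using False u a b by (simp add: c_def divide_nonpos_pos mult_nonpos_nonneg)
    moreover have "0 \<le> phi t" using yo t by (simp add: young_orlicz_def)
    ultimately have "1 \<le> exp (- (c - phi t))" by simp
    then show ?thesis
      using prob_le_1[of E] unfolding E_def c_def by linarith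
  next
    case True
    have E: "E \<in> sets M" unfolding E_def using X Y by measurable
    have "indicator E x \<le> ennreal (exp (- c)) * ennreal (exp (t * (X x + Y x) / (a + b)))" for x
    proof (cases "x \<in> E")
      case True
      then have "2 * u < X x + Y x" by (simp add: E_def)
      then have "c \<le> t * (X x + Y x) / (a + b)"
        using \<open>0 \<le> t\<close> a b by (simp add: c_def divide_right_mono mult_left_mono)
      then have "1 \<le> exp (- c) * exp (t * (X x + Y x) / (a + b))"
        by (simp flip: exp_add)
      then show ?thesis
        using True by (simp flip: ennreal_mult ennreal_1 add: ennreal_leI)
    qed simp
    then have "emeasure M E \<le> (\<integral>\<^sup>+ x. ennreal (exp (- c)) * ennreal (exp (t * (X x + Y x) / (a + b))) \<partial>M)"
      using E by (simp flip: nn_integral_indicator add: nn_integral_mono)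
    also have "\<dots> = ennreal (exp (- c)) * (\<integral>\<^sup>+ x. ennreal (exp (t * (X x + Y x) / (a + b))) \<partial>M)"
      using X Y by (simp add: nn_integral_cmult)
    also have "\<dots> \<le> ennreal (exp (- c)) * ennreal (exp (phi t))"
      using nn_integral_exp_sum_le[OF yo X Y nX a nY b t] by (rule mult_left_mono) simp
    also have "\<dots> = ennreal (exp (- (c - phi t)))"
      by (simp flip: ennreal_mult exp_add)
    finally show ?thesis
      by (simp add: E_def c_def emeasure_eq_measure)
  qed
qed

lemma exp_neg_SUP_ge:
  assumes "D \<noteq> {}" and le: "\<And>t. t \<in> D \<Longrightarrow> m \<le> exp (- f t)"
  shows "m \<le> exp_neg (SUP t\<in>D. ereal (f t))"
proof (cases "0 < m")
  case False
  then show ?thesis by (auto simp: exp_neg_def intro: order_trans[of m 0])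
next
  case True
  have "(SUP t\<in>D. ereal (f t)) \<le> ereal (- ln m)"
  proof (rule SUP_least)
    fix t assume "t \<in> D"
    then have "ln m \<le> - f t" using le ln_le_cancel_iff[of m "exp (- f t)"] True by simp
    then show "ereal (f t) \<le> ereal (- ln m)" by simp
  qed
  moreover obtain t where "t \<in> D" using assms by auto
  then have "ereal (f t) \<le> (SUP t\<in>D. ereal (f t))" by (rule SUP_upper)
  ultimately obtain r where r: "(SUP t\<in>D. ereal (f t)) = ereal r" "r \<le> - ln m"
    by (cases "SUP t\<in>D. ereal (f t)") auto
  then have "exp (- (- ln m)) \<le> exp (- r)" by simp
  then show ?thesis using True r(1) by (simp add: exp_neg_def)
qed

lemma measure_both_gt_le_young_fenchel:
  assumes "prob_space M" and yo: "young_orlicz phi l0"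
    and "X \<in> borel_measurable M" and "Y \<in> borel_measurable M"
    and "bphi_norm M phi l0 X = ereal a" and "0 < a"
    and "bphi_norm M phi l0 Y = ereal b" and "0 < b"
    and "0 \<le> u"
  shows "measure M {x\<in>space M. u < X x \<and> u < Y x}
    \<le> exp_neg (young_fenchel phi l0 (2 * u / (a + b)))"
  unfolding young_fenchel_def
proof (rule exp_neg_SUP_ge)
  have "0 \<in> yo_dom l0" using yo by (simp add: young_orlicz_def yo_dom_def zero_ereal_def)
  then show "yo_dom l0 \<noteq> {}" by blast
qed (rule measure_both_gt_le[OF assms])

lemma indicator_UN_ge_bonferroni:
  assumes "finite I"
  shows "(\<Sum>i\<in>I. indicator (A i) x) - (\<Sum>i\<in>I. \<Sum>j\<in>I-{i}. indicator (A i \<inter> A j) x)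
    \<le> (indicator (\<Union>i\<in>I. A i) x :: real)"
proof -
  define S where "S = (\<Sum>i\<in>I. indicator (A i) x :: real)"
  have "(\<Sum>i\<in>I. \<Sum>j\<in>I-{i}. indicator (A i \<inter> A j) x)
      = (\<Sum>i\<in>I. indicator (A i) x * (S - indicator (A i) x) :: real)"
    using assms by (intro sum.cong) (auto simp: S_def indicator_inter_arith sum_distrib_left[symmetric] sum_diff1)
  also have "\<dots> = (\<Sum>i\<in>I. indicator (A i) x * S - indicator (A i) x)"
    by (intro sum.cong) (auto simp: indicator_def)
  also have "\<dots> = S * S - S"
    by (simp add: S_def sum_subtractf sum_distrib_right)
  finally have pairs: "(\<Sum>i\<in>I. \<Sum>j\<in>I-{i}. indicator (A i \<inter> A j) x) = S * S - S" .
  show ?thesis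
  proof (cases "x \<in> (\<Union>i\<in>I. A i)")
    case True
    have "S - (S * S - S) \<le> 1" using zero_le_square[of "S - 1"] by (simp add: algebra_simps)
    then show ?thesis using True pairs S_def by simp
  next
    case False
    then have "S = 0" by (simp add: S_def)
    then show ?thesis using False pairs S_def by simp
  qed
qed

lemma (in prob_space) measure_UN_ge_bonferroni:
  assumes "finite I" and A: "\<And>i. i \<in> I \<Longrightarrow> A i \<in> events"
  shows "(\<Sum>i\<in>I. prob (A i)) - (\<Sum>i\<in>I. \<Sum>j\<in>I-{i}. prob (A i \<inter> A j)) \<le> prob (\<Union>i\<in>I. A i)"
proof -
  have [simp]: "integrable M (indicator B :: 'a \<Rightarrow> real)" "(\<integral>x. indicator B x \<partial>M) = prob B"
    if "B \<in> events" for B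
    using that by (auto intro: integrable_real_indicator simp: emeasure_eq_measure Int_absorb2)
  have UN_A: "(\<Union>i\<in>I. A i) \<in> events"
    using A \<open>finite I\<close> by auto
  have "(\<Sum>i\<in>I. prob (A i)) - (\<Sum>i\<in>I. \<Sum>j\<in>I-{i}. prob (A i \<inter> A j))
      = (\<integral>x. (\<Sum>i\<in>I. indicator (A i) x) - (\<Sum>i\<in>I. \<Sum>j\<in>I-{i}. indicator (A i \<inter> A j) x) \<partial>M)"
  proof -
    have "integrable M (\<lambda>x. \<Sum>j\<in>I-{i}. indicator (A i \<inter> A j) x :: real)"
      "(\<integral>x. (\<Sum>j\<in>I-{i}. indicator (A i \<inter> A j) x) \<partial>M) = (\<Sum>j\<in>I-{i}. prob (A i \<inter> A j))"
      if "i \<in> I" for i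
      using A that by (auto simp: Bochner_Integration.integral_sum intro!: Bochner_Integration.integrable_sum)
    with A show ?thesis
      by (subst Bochner_Integration.integral_diff)
        (auto simp: Bochner_Integration.integral_sum intro!: Bochner_Integration.integrable_sum)
  qed
  also have "\<dots> \<le> (\<integral>x. indicator (\<Union>i\<in>I. A i) x \<partial>M)"
  proof (rule integral_mono)
    show "integrable M (\<lambda>x. (\<Sum>i\<in>I. indicator (A i) x)
        - (\<Sum>i\<in>I. \<Sum>j\<in>I-{i}. indicator (A i \<inter> A j) x) :: real)"
      using A by (auto intro!: Bochner_Integration.integrable_diff Bochner_Integration.integrable_sum)
    show "integrable M (indicator (\<Union>i\<in>I. A i) :: 'a \<Rightarrow> real)"
      using UN_A by simp
  qed (rule indicator_UN_ge_bonferroni[OF \<open>finite I\<close>])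
  also have "\<dots> = prob (\<Union>i\<in>I. A i)"
    using UN_A by simp
  finally show ?thesis .
qed

theorem proposition4p1:
  fixes M :: "'a measure" and \<xi> :: "nat \<Rightarrow> 'a \<Rightarrow> real" and d :: nat
    and phi :: "real \<Rightarrow> real" and l0 :: ereal and \<beta> \<delta> :: "nat \<Rightarrow> real"
  assumes "prob_space M"
    and "d \<ge> 2"
    and rv: "\<forall>i\<in>{1..d}. \<xi> i \<in> borel_measurable M"
    and centered: "\<forall>i\<in>{1..d}. integrable M (\<xi> i) \<and> (\<integral>x. \<xi> i x \<partial>M) = 0"
    and "young_orlicz phi l0"
    and beta: "\<forall>i\<in>{1..d}. bphi_norm M phi l0 (\<xi> i) = ereal (\<beta> i) \<and> 0 < \<beta> i"
    and delta: "\<forall>i\<in>{1..d}. 0 < \<delta> i \<and> \<delta> i \<le> \<beta> i"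
    and lower: "\<forall>i\<in>{1..d}. \<forall>u::real. u \<ge> 1 \<longrightarrow>
        measure M {x\<in>space M. \<xi> i x > u} \<ge> exp_neg (young_fenchel phi l0 (u / \<delta> i))"
    and "u \<ge> 1"
  shows "measure M {x\<in>space M. (MAX i\<in>{1..d}. \<xi> i x) > u} \<ge>
           (\<Sum>i\<in>{1..d}. exp_neg (young_fenchel phi l0 (u / \<delta> i)))
         - (\<Sum>i\<in>{1..d}. \<Sum>j\<in>{1..d}-{i}.
              exp_neg (young_fenchel phi l0 (2 * u / (\<beta> i + \<beta> j))))"
proof -
  interpret prob_space M by fact
  define A where "A i = {x\<in>space M. u < \<xi> i x}" for i
  have A_events: "A i \<in> events" if "i \<in> {1..d}" for i
  proof -
    have "\<xi> i \<in> borel_measurable M" using rv that by blast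
    then show ?thesis unfolding A_def by measurable
  qed
  have max_eq: "{x\<in>space M. (MAX i\<in>{1..d}. \<xi> i x) > u} = (\<Union>i\<in>{1..d}. A i)"
    using \<open>d \<ge> 2\<close> by (auto simp: A_def Max_gr_iff)
  have pairs: "prob (A i \<inter> A j) \<le> exp_neg (young_fenchel phi l0 (2 * u / (\<beta> i + \<beta> j)))"
    if "i \<in> {1..d}" "j \<in> {1..d}" for i j
  proof -
    have "A i \<inter> A j = {x\<in>space M. u < \<xi> i x \<and> u < \<xi> j x}"
      by (auto simp: A_def)
    then show ?thesis
      using measure_both_gt_le_young_fenchel[OF \<open>prob_space M\<close> \<open>young_orlicz phi l0\<close>,
          of "\<xi> i" "\<xi> j" "\<beta> i" "\<beta> j" u] rv beta that \<open>u \<ge> 1\<close>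
      by simp
  qed
  have singles: "exp_neg (young_fenchel phi l0 (u / \<delta> i)) \<le> prob (A i)" if "i \<in> {1..d}" for i
    using lower that \<open>u \<ge> 1\<close> by (simp add: A_def)
  have "(\<Sum>i\<in>{1..d}. exp_neg (young_fenchel phi l0 (u / \<delta> i)))
      - (\<Sum>i\<in>{1..d}. \<Sum>j\<in>{1..d}-{i}. exp_neg (young_fenchel phi l0 (2 * u / (\<beta> i + \<beta> j))))
    \<le> (\<Sum>i\<in>{1..d}. prob (A i)) - (\<Sum>i\<in>{1..d}. \<Sum>j\<in>{1..d}-{i}. prob (A i \<inter> A j))"
    using singles pairs by (intro diff_mono sum_mono) auto
  also have "\<dots> \<le> prob (\<Union>i\<in>{1..d}. A i)"
    using A_events by (intro measure_UN_ge_bonferroni) auto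
  finally show ?thesis
    using max_eq by simp
qed

end
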